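(* Let $u_{\varepsilon,\ell}$ be a 3iet word with parameters $\varepsilon,\ell$ and let ${\rm ind}(u_{\varepsilon,\ell})=+\infty$. Then $\sup_{n\in\mathbb N} a_n = +\infty$, where $a_n$ are the partial quotients of the continued fraction $\varepsilon=[0,a_1,a_2,\dots]$.
   Context: Parameters $\varepsilon,\ell$ satisfy $\varepsilon\in(0,1)\setminus\mathbb Q$ and $\max\{\varepsilon,1-\varepsilon\}<\ell<1$. The three interval exchange $T_{\varepsilon,\ell}:[0,\ell)\to[0,\ell)$ is defined by $T_{\varepsilon,\ell}(x)=x+1-\varepsilon$ for $x\in I_A:=[0,\ell-1+\varepsilon)$, $T_{\varepsilon,\ell}(x)=x+1-2\varepsilon$ for $x\in I_B:=[\ell-1+\varepsilon,\varepsilon)$, and $T_{\varepsilon,\ell}(x)=x-\varepsilon$ for $x\in I_C:=[\varepsilon,\ell)$. A 3iet word with parameters $\varepsilon,\ell$ is the word $u=(u_n)_{n\in\mathbb N}$ over $\{A,B,C\}$ with $u_n=X$ iff $T_{\varepsilon,\ell}^n(x_0)\in I_X$, for some $x_0\in[0,\ell)$; its language and index do not depend on $x_0$. A word $v$ is a power $w^r$ ($r=|v|/|w|$) if $|v|\ge|w|$ and $v$ is a prefix of $www\cdots$; ${\rm ind}(w)=\sup\{r\in\mathbb Q: w^r \text{ is a factor of } u\}$ and ${\rm ind}(u)=\sup\{{\rm ind}(w): w \text{ a factor of } u\}$. *)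

theory Defs
  imports Complex_Main "HOL-Library.Extended_Real"
begin

datatype letter = A | B | C

definition T3 :: "real \<Rightarrow> real \<Rightarrow> real \<Rightarrow> real" where
  "T3 eps l x =
     (if 0 \<le> x \<and> x < l - 1 + eps then x + 1 - eps
      else if l - 1 + eps \<le> x \<and> x < eps then x + 1 - 2 * eps
      else x - eps)"

definition code3 :: "real \<Rightarrow> real \<Rightarrow> real \<Rightarrow> letter" where
  "code3 eps l x =
     (if 0 \<le> x \<and> x < l - 1 + eps then A
      else if l - 1 + eps \<le> x \<and> x < eps then B
      else C)"

definition iet_word :: "real \<Rightarrow> real \<Rightarrow> real \<Rightarrow> nat \<Rightarrow> letter" where
  "iet_word eps l x0 n = code3 eps l ((T3 eps l ^^ n) x0)"

definition is_factor :: "(nat \<Rightarrow> 'a) \<Rightarrow> 'a list \<Rightarrow> bool" where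
  "is_factor u v \<longleftrightarrow> (\<exists>i. v = map u [i..<i + length v])"

definition is_power :: "'a list \<Rightarrow> 'a list \<Rightarrow> rat \<Rightarrow> bool" where
  "is_power v w r \<longleftrightarrow> w \<noteq> [] \<and> length w \<le> length v \<and>
     r = of_nat (length v) / of_nat (length w) \<and>
     (\<forall>k < length v. v ! k = w ! (k mod length w))"

definition ind_word :: "(nat \<Rightarrow> 'a) \<Rightarrow> 'a list \<Rightarrow> ereal" where
  "ind_word u w = Sup {ereal (real_of_rat r) | r. \<exists>v. is_factor u v \<and> is_power v w r}"

definition ind_inf :: "(nat \<Rightarrow> 'a) \<Rightarrow> ereal" where
  "ind_inf u = Sup {ind_word u w | w. w \<noteq> [] \<and> is_factor u w}"

text \<open>Continued fraction of x in (0,1): x = [0; a_1, a_2, ...] via the Gauss map.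
  cf_rem x k is the k-th remainder (cf_rem x 0 = x), and a_n = floor(1 / cf_rem x (n-1)) for n >= 1.\<close>
fun cf_rem :: "real \<Rightarrow> nat \<Rightarrow> real" where
  "cf_rem x 0 = x"
| "cf_rem x (Suc k) = frac (1 / cf_rem x k)"

definition cf_pq :: "real \<Rightarrow> nat \<Rightarrow> int" where
  "cf_pq x n = \<lfloor>1 / cf_rem x (n - 1)\<rfloor>"

end

theory Submission
  imports Defs
begin

text \<open>Suppose the partial quotients of \<open>eps\<close> are bounded by \<open>K\<close>. Then \<open>eps\<close> is badly
  approximable, \<open>\<bar>q eps - m\<bar> \<ge> 1 / ((K + 2) q)\<close>, and the points \<open>j eps mod 1\<close>, \<open>j < M\<close>,
  form a \<open>(K + 2) / M\<close>-net of the circle.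
  After \<open>p\<close> steps \<open>T\<close> has moved a point by \<open>m - q eps\<close> with \<open>p \<le> q \<le> 2p\<close>, so the two
  starting points \<open>y\<close> and \<open>T\<^sup>p y\<close> of an occurrence of \<open>w\<^sup>r\<close> with \<open>|w| = p\<close> are at distance
  at least \<open>1 / (2 (K + 2) p)\<close>. Their itineraries agree for \<open>(r - 1) p\<close> steps, during which the
  interval between them is translated rigidly; if \<open>(r - 1) p \<ge> 4 (K + 2)\<^sup>2 p\<close>, the net contains a
  preimage of the discontinuity \<open>eps\<close> inside this interval, which splits the itineraries in time.
  Hence every exponent is below \<open>1 + 4 (K + 2)\<^sup>2\<close> and the index is finite.\<close>

lemma nat_step_crossing:
  fixes f :: "nat \<Rightarrow> 'a::linorder"
  assumes "a < b" "f a \<le> x" "x < f b"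
  shows "\<exists>k. a \<le> k \<and> k < b \<and> f k \<le> x \<and> x < f (Suc k)"
  using assms
proof (induction b)
  case (Suc b)
  show ?case
  proof (cases "a < b \<and> x < f b")
    case True then show ?thesis using Suc by (meson less_SucI)
  next
    case False
    then have "f b \<le> x" using Suc.prems by (metis less_Suc_eq not_le)
    then show ?thesis using Suc.prems by (intro exI[of _ b]) auto
  qed
qed simp

lemma abs_diff_ge_opposite_signs:
  fixes a b :: int and e e' :: real
  assumes "a \<noteq> 0" "\<not> (0 < a \<and> 0 < b)" "\<not> (a < 0 \<and> b < 0)" "0 < e" "0 \<le> e'"
  shows "e \<le> \<bar>a * e - b * e'\<bar>"
proof (cases "0 < a")
  case True
  then have "e \<le> a * e" using assms(4) mult_right_mono[of 1 a e] by simp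
  moreover have "b * e' \<le> 0" using True assms(2,5) by (simp add: mult_nonpos_nonneg)
  ultimately show ?thesis by linarith
next
  case False
  then have "a \<le> -1" "0 \<le> b" using assms(1,3) by auto
  then have "a * e \<le> - e" "0 \<le> b * e'"
    using assms(4,5) mult_right_mono[of a "-1" e] by simp_all
  then show ?thesis by linarith
qed

lemma abs_diff_less_unit_coeffs:
  fixes s t e e' :: real
  assumes "0 \<le> s" "s < 1" "0 \<le> t" "t < 1" "0 < e'" "e' \<le> e"
  shows "\<bar>s * e - t * e'\<bar> < e"
proof -
  have "s * e < e" "t * e' < e'"
    using assms mult_strict_right_mono[of s 1 e] mult_strict_right_mono[of t 1 e'] by simp_all
  moreover have "0 \<le> s * e" "0 \<le> t * e'" using assms by simp_all
  ultimately show ?thesis using \<open>e' \<le> e\<close> by linarith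
qed

lemma near_midpoint_between:
  fixes w y z :: real
  assumes "\<bar>w - (y + z) / 2\<bar> < \<bar>z - y\<bar> / 2"
  shows "min y z < w" "w < max y z"
  using assms by (cases "y \<le> z"; auto simp: field_simps abs_if min_def max_def split: if_split_asm)+

lemma cf_rem_bounds:
  assumes "0 < x" "x < 1" "x \<notin> \<rat>"
  shows "0 < cf_rem x k \<and> cf_rem x k < 1 \<and> cf_rem x k \<notin> \<rat>"
proof (induction k)
  case 0 then show ?case using assms by simp
next
  case (Suc k)
  define r where "r = cf_rem x k"
  have r: "0 < r" "r \<notin> \<rat>" using Suc r_def by auto
  have inv_irrat: "1 / r \<notin> \<rat>"
    using r Rats_divide[OF Rats_1, of "1 / r"] by auto
  have "frac (1 / r) \<notin> \<rat>"
  proof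
    assume "frac (1 / r) \<in> \<rat>"
    then have "frac (1 / r) + of_int \<lfloor>1 / r\<rfloor> \<in> \<rat>" by simp
    then show False using inv_irrat by (simp add: frac_def)
  qed
  moreover have "1 / r \<notin> \<int>" using inv_irrat Ints_subset_Rats by blast
  ultimately show ?case by (simp add: r_def[symmetric] frac_lt_1)
qed

lemma cf_pq_Suc: "cf_pq x (Suc k) = \<lfloor>1 / cf_rem x k\<rfloor>"
  by (simp add: cf_pq_def)

text \<open>Convergents with an index shift: \<open>cf_num x k / cf_den x k\<close> is the \<open>(k - 1)\<close>-st convergent
  \<open>p\<^sub>k\<^sub>-\<^sub>1 / q\<^sub>k\<^sub>-\<^sub>1\<close>, starting from \<open>q\<^sub>-\<^sub>1 = 0, p\<^sub>-\<^sub>1 = 1\<close>.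
  The product \<open>cf_err x k\<close> of the first \<open>k\<close> remainders equals \<open>\<bar>q\<^sub>k\<^sub>-\<^sub>1 x - p\<^sub>k\<^sub>-\<^sub>1\<bar>\<close>.\<close>

fun cf_den :: "real \<Rightarrow> nat \<Rightarrow> int" where
  "cf_den x 0 = 0"
| "cf_den x (Suc 0) = 1"
| "cf_den x (Suc (Suc k)) = cf_pq x (Suc k) * cf_den x (Suc k) + cf_den x k"

fun cf_num :: "real \<Rightarrow> nat \<Rightarrow> int" where
  "cf_num x 0 = 1"
| "cf_num x (Suc 0) = 0"
| "cf_num x (Suc (Suc k)) = cf_pq x (Suc k) * cf_num x (Suc k) + cf_num x k"

fun cf_err :: "real \<Rightarrow> nat \<Rightarrow> real" where
  "cf_err x 0 = 1"
| "cf_err x (Suc k) = cf_err x k * cf_rem x k"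

locale unit_interval_irrational =
  fixes x :: real
  assumes pos: "0 < x" and less_one: "x < 1" and irrational: "x \<notin> \<rat>"
begin

lemma cf_rem_pos: "0 < cf_rem x k"
  and cf_rem_less_one: "cf_rem x k < 1"
  using cf_rem_bounds[OF pos less_one irrational] by auto

lemma cf_pq_Suc_ge_1: "1 \<le> cf_pq x (Suc k)"
proof -
  have "1 < 1 / cf_rem x k" using cf_rem_pos[of k] cf_rem_less_one[of k] by simp
  then show ?thesis unfolding cf_pq_Suc by linarith
qed

lemma cf_err_pos: "0 < cf_err x k"
  by (induction k) (auto simp: cf_rem_pos)

lemma cf_err_Suc_le: "cf_err x (Suc k) \<le> cf_err x k"
  using cf_err_pos[of k] cf_rem_less_one[of k] by (simp add: mult_left_le)

lemma cf_err_Suc_Suc: "cf_err x (Suc (Suc k)) = cf_err x k - cf_pq x (Suc k) * cf_err x (Suc k)"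
proof -
  define r where "r = cf_rem x k"
  have "r \<noteq> 0" using cf_rem_pos[of k] r_def by simp
  have "cf_rem x (Suc k) = 1 / r - cf_pq x (Suc k)"
    by (simp add: r_def cf_pq_Suc frac_def)
  then have "cf_err x (Suc (Suc k)) = cf_err x k * r * (1 / r - cf_pq x (Suc k))"
    by (simp add: r_def)
  also have "\<dots> = cf_err x k - cf_pq x (Suc k) * (cf_err x k * r)"
    using \<open>r \<noteq> 0\<close> by (simp add: algebra_simps)
  finally show ?thesis by (simp add: r_def)
qed

lemma le_cf_pq_mult: "0 \<le> d \<Longrightarrow> d \<le> cf_pq x (Suc k) * d"
  using mult_right_mono[OF cf_pq_Suc_ge_1, of d k] by simp

lemma cf_den_nonneg_mono: "0 \<le> cf_den x k \<and> cf_den x k \<le> cf_den x (Suc k) \<and> 1 \<le> cf_den x (Suc k)"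
proof (induction k)
  case (Suc k)
  then have "cf_den x (Suc k) \<le> cf_pq x (Suc k) * cf_den x (Suc k)"
    by (intro le_cf_pq_mult) linarith
  then show ?case using Suc by (simp only: cf_den.simps) linarith
qed simp

lemma cf_den_Suc_pos: "1 \<le> cf_den x (Suc k)"
  and cf_den_nonneg: "0 \<le> cf_den x k"
  and cf_den_le_Suc: "cf_den x k \<le> cf_den x (Suc k)"
  using cf_den_nonneg_mono by blast+

lemma cf_den_sum_ge: "int k + 1 \<le> cf_den x k + cf_den x (Suc k)"
proof (induction k)
  case (Suc k)
  have "cf_den x (Suc k) \<le> cf_pq x (Suc k) * cf_den x (Suc k)"
    using le_cf_pq_mult cf_den_nonneg by blast
  then show ?case using Suc cf_den_Suc_pos[of k] unfolding cf_den.simps by linarith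
qed simp

lemma cf_approx_error: "cf_den x k * x - cf_num x k = (-1) ^ Suc k * cf_err x k"
proof (induction k rule: induct_nat_012)
  case (ge2 k)
  have "cf_den x (Suc (Suc k)) * x - cf_num x (Suc (Suc k))
      = cf_pq x (Suc k) * (cf_den x (Suc k) * x - cf_num x (Suc k)) + (cf_den x k * x - cf_num x k)"
    by (simp add: algebra_simps)
  also have "\<dots> = (-1) ^ Suc k * (cf_err x k - cf_pq x (Suc k) * cf_err x (Suc k))"
    using ge2 by (simp add: algebra_simps)
  also have "\<dots> = (-1) ^ Suc (Suc (Suc k)) * cf_err x (Suc (Suc k))"
    by (simp add: cf_err_Suc_Suc del: cf_err.simps)
  finally show ?case .
qed simp_all

lemma cf_det: "cf_den x (Suc k) * cf_num x k - cf_den x k * cf_num x (Suc k) = (-1) ^ k"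
  by (induction k rule: induct_nat_012) (simp_all add: algebra_simps)

lemma cf_den_err_identity: "cf_den x k * cf_err x (Suc k) + cf_den x (Suc k) * cf_err x k = 1"
proof (induction k)
  case (Suc k)
  have "cf_den x (Suc k) * cf_err x (Suc (Suc k)) + cf_den x (Suc (Suc k)) * cf_err x (Suc k)
      = cf_den x k * cf_err x (Suc k) + cf_den x (Suc k) * cf_err x k"
    by (simp only: cf_err_Suc_Suc cf_den.simps) (simp add: algebra_simps)
  then show ?case using Suc by simp
qed simp

lemma cf_err_lower: "1 \<le> (cf_den x k + cf_den x (Suc k)) * cf_err x k"
proof -
  have "1 = cf_den x k * cf_err x (Suc k) + cf_den x (Suc k) * cf_err x k"
    using cf_den_err_identity by simp
  also have "\<dots> \<le> cf_den x k * cf_err x k + cf_den x (Suc k) * cf_err x k"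
    using cf_err_Suc_le cf_den_nonneg by (simp add: mult_left_mono)
  finally show ?thesis by (simp add: algebra_simps)
qed

lemma cf_err_upper: "cf_den x (Suc k) * cf_err x k \<le> 1"
proof -
  have "0 \<le> cf_den x k * cf_err x (Suc k)"
    using cf_den_nonneg[of k] cf_err_pos[of "Suc k"] by simp
  then show ?thesis using cf_den_err_identity[of k] by linarith
qed

lemma cf_lattice_coords:
  fixes q m :: int
  obtains a b :: int where "q = a * cf_den x k + b * cf_den x (Suc k)"
    and "q * x - m = (-1) ^ Suc k * (a * cf_err x k - b * cf_err x (Suc k))"
proof -
  define D :: int where "D = (-1) ^ k"
  have DD: "D * D = 1" by (simp add: D_def flip: power_add)
  have det: "cf_den x (Suc k) * cf_num x k - cf_den x k * cf_num x (Suc k) = D"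
    using cf_det by (simp add: D_def)
  define a where "a = D * (m * cf_den x (Suc k) - q * cf_num x (Suc k))"
  define b where "b = D * (q * cf_num x k - m * cf_den x k)"
  have q: "q = a * cf_den x k + b * cf_den x (Suc k)"
  proof -
    have "a * cf_den x k + b * cf_den x (Suc k) = D * D * q"
      by (simp add: a_def b_def algebra_simps flip: det)
    then show ?thesis using DD by simp
  qed
  have m: "m = a * cf_num x k + b * cf_num x (Suc k)"
  proof -
    have "a * cf_num x k + b * cf_num x (Suc k) = D * D * m"
      by (simp add: a_def b_def algebra_simps flip: det)
    then show ?thesis using DD by simp
  qed
  have "q * x - m = a * (cf_den x k * x - cf_num x k) + b * (cf_den x (Suc k) * x - cf_num x (Suc k))"
    by (subst q, subst m) (simp add: algebra_simps)
  also have "\<dots> = (-1) ^ Suc k * (a * cf_err x k - b * cf_err x (Suc k))"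
    by (simp only: cf_approx_error) (simp add: algebra_simps)
  finally show ?thesis using q that by blast
qed

lemma cf_best_approx:
  fixes q m :: int
  assumes q_pos: "1 \<le> q" and q_less: "q < cf_den x (Suc k)"
  shows "cf_err x k \<le> \<bar>q * x - m\<bar>"
proof -
  obtain a b :: int where q: "q = a * cf_den x k + b * cf_den x (Suc k)"
    and err: "q * x - m = (-1) ^ Suc k * (a * cf_err x k - b * cf_err x (Suc k))"
    by (rule cf_lattice_coords)
  have "a \<noteq> 0"
  proof
    assume "a = 0"
    then have "q = b * cf_den x (Suc k)" using q by simp
    then show False using q_pos q_less cf_den_Suc_pos[of k]
      mult_nonpos_nonneg[of b "cf_den x (Suc k)"] mult_right_mono[of 1 b "cf_den x (Suc k)"]
      by (cases "b \<le> 0") auto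
  qed
  moreover have "\<not> (0 < a \<and> 0 < b)"
  proof
    assume ab: "0 < a \<and> 0 < b"
    then have "0 \<le> a * cf_den x k" using cf_den_nonneg[of k] by simp
    moreover have "cf_den x (Suc k) \<le> b * cf_den x (Suc k)"
      using ab cf_den_nonneg[of "Suc k"] mult_right_mono[of 1 b "cf_den x (Suc k)"] by simp
    ultimately show False using q q_less by linarith
  qed
  moreover have "\<not> (a < 0 \<and> b < 0)"
    using q q_pos cf_den_nonneg[of k] cf_den_nonneg[of "Suc k"]
    by (smt (verit) mult_nonpos_nonneg)
  ultimately have "cf_err x k \<le> \<bar>a * cf_err x k - b * cf_err x (Suc k)\<bar>"
    using cf_err_pos[of k] cf_err_pos[of "Suc k"] by (intro abs_diff_ge_opposite_signs) auto
  then show ?thesis using err by (simp add: abs_mult)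
qed

lemma cf_real_coords:
  obtains a b :: real where "a * cf_den x k + b * cf_den x (Suc k) = X"
    and "a * (cf_den x k * x - cf_num x k) + b * (cf_den x (Suc k) * x - cf_num x (Suc k)) = t"
proof -
  define D :: real where "D = (-1) ^ k"
  have "D \<noteq> 0" by (simp add: D_def)
  define u1 where "u1 = cf_den x k * x - cf_num x k"
  define u2 where "u2 = cf_den x (Suc k) * x - cf_num x (Suc k)"
  have det: "cf_den x k * u2 - cf_den x (Suc k) * u1 = D"
  proof -
    have "cf_den x k * u2 - cf_den x (Suc k) * u1
        = real_of_int (cf_den x (Suc k) * cf_num x k - cf_den x k * cf_num x (Suc k))"
      by (simp add: u1_def u2_def algebra_simps)
    then show ?thesis by (simp add: cf_det D_def)
  qed
  show ?thesis
  proof (rule that[of "(X * u2 - cf_den x (Suc k) * t) / D" "(cf_den x k * t - u1 * X) / D",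
        folded u1_def u2_def])
  qed (use det \<open>D \<noteq> 0\<close> in \<open>simp_all add: field_simps\<close>)
qed

text \<open>Rounding down the real coordinates of \<open>(cf_den x k + cf_den x (Suc k) - 1/2, t)\<close> in the
  basis of the two convergent vectors gives the integer point \<open>(j, m)\<close>: each coordinate loses less
  than one unit, which moves \<open>j\<close> down by less than the sum of the denominators and the error
  \<open>j x - m - t\<close> by less than one basis error.\<close>
lemma cf_inhomogeneous_approx:
  obtains j m :: int where "0 \<le> j" "j < cf_den x k + cf_den x (Suc k)"
    and "\<bar>j * x - m - t\<bar> < cf_err x k"
proof -
  define X :: real where "X = cf_den x k + cf_den x (Suc k) - 1/2"
  define u1 where "u1 = cf_den x k * x - cf_num x k"
  define u2 where "u2 = cf_den x (Suc k) * x - cf_num x (Suc k)"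
  obtain a b :: real where X: "a * cf_den x k + b * cf_den x (Suc k) = X"
    and t: "a * u1 + b * u2 = t"
    unfolding u1_def u2_def by (rule cf_real_coords)
  define j where "j = \<lfloor>a\<rfloor> * cf_den x k + \<lfloor>b\<rfloor> * cf_den x (Suc k)"
  define m where "m = \<lfloor>a\<rfloor> * cf_num x k + \<lfloor>b\<rfloor> * cf_num x (Suc k)"
  have j: "real_of_int j = X - frac a * cf_den x k - frac b * cf_den x (Suc k)"
    using X by (simp add: j_def frac_def algebra_simps)
  have fa: "0 \<le> frac a" "frac a < 1" and fb: "0 \<le> frac b" "frac b < 1"
    by (simp_all add: frac_lt_1)
  have "frac a * cf_den x k \<le> cf_den x k" "frac b * cf_den x (Suc k) < cf_den x (Suc k)"
    using fa fb cf_den_nonneg[of k] cf_den_Suc_pos[of k] by (simp_all add: mult_left_le_one_le)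
  then have "0 \<le> j" using j X_def by linarith
  moreover have "j < cf_den x k + cf_den x (Suc k)"
  proof -
    have "0 \<le> frac a * cf_den x k" "0 \<le> frac b * cf_den x (Suc k)"
      using fa fb cf_den_nonneg[of k] cf_den_nonneg[of "Suc k"] by simp_all
    then have "real_of_int j < real_of_int (cf_den x k + cf_den x (Suc k))"
      using j X_def by simp
    then show ?thesis by (simp only: of_int_less_iff)
  qed
  moreover have "\<bar>j * x - m - t\<bar> = \<bar>frac a * cf_err x k - frac b * cf_err x (Suc k)\<bar>"
  proof -
    have "j * x - m - t = - (frac a * u1 + frac b * u2)"
      using t by (simp add: j_def m_def u1_def u2_def frac_def algebra_simps)
    also have "\<dots> = (-1) ^ k * (frac a * cf_err x k - frac b * cf_err x (Suc k))"
      unfolding u1_def u2_def cf_approx_error by (simp add: algebra_simps)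
    finally show ?thesis by (simp add: abs_mult)
  qed
  moreover have "\<bar>frac a * cf_err x k - frac b * cf_err x (Suc k)\<bar> < cf_err x k"
    using fa fb cf_err_pos[of "Suc k"] cf_err_Suc_le[of k] by (rule abs_diff_less_unit_coeffs)
  ultimately show ?thesis by (intro that[of j m]) simp_all
qed

end

locale bounded_cf = unit_interval_irrational +
  fixes K :: nat
  assumes cf_pq_le: "cf_pq x (Suc k) \<le> int K"
begin

lemma cf_den_growth: "cf_den x (Suc (Suc k)) \<le> (int K + 1) * cf_den x (Suc k)"
proof -
  have "cf_pq x (Suc k) * cf_den x (Suc k) \<le> int K * cf_den x (Suc k)"
    using cf_pq_le cf_den_nonneg by (intro mult_right_mono)
  then show ?thesis using cf_den_le_Suc[of k] by (simp add: algebra_simps)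
qed

lemma badly_approximable:
  fixes q m :: int
  assumes q_pos: "1 \<le> q"
  shows "1 / ((real K + 2) * q) \<le> \<bar>q * x - m\<bar>"
proof -
  have "q < cf_den x (Suc (2 * nat q))"
    using cf_den_sum_ge[of "2 * nat q"] cf_den_le_Suc[of "2 * nat q"] q_pos by linarith
  then obtain k where k: "1 \<le> k" "cf_den x k \<le> q" "q < cf_den x (Suc k)"
    using nat_step_crossing[of 1 "Suc (2 * nat q)" "cf_den x" q] q_pos by auto
  have "1 \<le> (cf_den x k + cf_den x (Suc k)) * cf_err x k"
    by (rule cf_err_lower)
  also have "\<dots> \<le> ((real K + 2) * q) * cf_err x k"
  proof -
    have "cf_den x k + cf_den x (Suc k) \<le> (int K + 2) * q"
    proof -
      have "cf_den x (Suc k) \<le> (int K + 1) * cf_den x k"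
        using cf_den_growth[of "k - 1"] k(1) by (cases k) (simp_all del: cf_den.simps)
      then show ?thesis using mult_left_mono[OF k(2), of "int K + 2"]
        by (simp add: algebra_simps del: cf_den.simps)
    qed
    then have "real_of_int (cf_den x k + cf_den x (Suc k)) \<le> real_of_int ((int K + 2) * q)"
      by (simp only: of_int_le_iff)
    then show ?thesis using cf_err_pos[of k] by (intro mult_right_mono) (simp_all add: add.commute)
  qed
  also have "\<dots> \<le> ((real K + 2) * q) * \<bar>q * x - m\<bar>"
    using cf_best_approx[OF q_pos k(3)] q_pos by (intro mult_left_mono) simp_all
  finally show ?thesis using q_pos by (simp add: divide_le_eq mult.commute)
qed

lemma uniform_inhomogeneous_approx:
  fixes M :: nat
  assumes "1 \<le> M"
  obtains j :: nat and m :: int where "j < M" "\<bar>j * x - m - t\<bar> < (real K + 2) / M"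
proof -
  define f where "f k = cf_den x k + cf_den x (Suc k)" for k
  have "f 0 \<le> int M" "int M < f M"
    using assms cf_den_sum_ge[of M] by (simp_all add: f_def)
  then obtain k where k: "f k \<le> int M" "int M < f (Suc k)"
    using nat_step_crossing[of 0 M f "int M"] assms by auto
  obtain j m :: int where j: "0 \<le> j" "j < f k" and jm: "\<bar>j * x - m - t\<bar> < cf_err x k"
    using cf_inhomogeneous_approx unfolding f_def by blast
  have "cf_err x k \<le> 1 / cf_den x (Suc k)"
    using cf_err_upper[of k] cf_den_Suc_pos[of k] by (simp add: le_divide_eq mult.commute)
  also have "\<dots> < (real K + 2) / M"
  proof -
    have "int M < (int K + 2) * cf_den x (Suc k)"
      using k(2) cf_den_growth[of k] by (simp add: f_def algebra_simps del: cf_den.simps)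
    then have "real_of_int (int M) < real_of_int ((int K + 2) * cf_den x (Suc k))"
      by (simp only: of_int_less_iff)
    then show ?thesis using cf_den_Suc_pos[of k] assms by (simp add: divide_simps mult.commute add.commute)
  qed
  finally show ?thesis using that[of "nat j" m] j jm k(1) by simp
qed

end

definition iet_shift :: "real \<Rightarrow> letter \<Rightarrow> real" where
  "iet_shift eps X = (case X of A \<Rightarrow> 1 - eps | B \<Rightarrow> 1 - 2 * eps | C \<Rightarrow> - eps)"

lemma T3_eq_shift: "T3 eps l x = x + iet_shift eps (code3 eps l x)"
  by (simp add: T3_def code3_def iet_shift_def)

locale three_iet =
  fixes eps l :: real
  assumes eps_pos: "0 < eps" and eps_less: "eps < l"
    and one_minus_eps_less: "1 - eps < l" and l_less_one: "l < 1"
begin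

abbreviation T :: "real \<Rightarrow> real" where "T \<equiv> T3 eps l"
abbreviation code :: "real \<Rightarrow> letter" where "code \<equiv> code3 eps l"

lemma T_maps_to: "0 \<le> x \<Longrightarrow> x < l \<Longrightarrow> 0 \<le> T x \<and> T x < l"
  using eps_pos eps_less one_minus_eps_less l_less_one by (auto simp: T3_def)

lemma funpow_T_maps_to: "0 \<le> x \<Longrightarrow> x < l \<Longrightarrow> 0 \<le> (T ^^ k) x \<and> (T ^^ k) x < l"
  by (induction k) (auto simp: T_maps_to)

lemma code_eq_C_iff: "0 \<le> x \<Longrightarrow> x < l \<Longrightarrow> code x = C \<longleftrightarrow> eps \<le> x"
  using l_less_one by (auto simp: code3_def)

lemma code_between: "0 \<le> a \<Longrightarrow> a \<le> b \<Longrightarrow> b \<le> c \<Longrightarrow> code a = code c \<Longrightarrow> code b = code a"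
  by (auto simp: code3_def split: if_splits)

lemma funpow_T_Suc: "(T ^^ Suc k) x = (T ^^ k) x + iet_shift eps (code ((T ^^ k) x))"
  by (simp only: funpow.simps(2) comp_apply) (rule T3_eq_shift)

lemma funpow_T_displacement:
  "\<exists>(m::int) (q::int). (T ^^ k) x - x = m - q * eps \<and> int k \<le> q \<and> q \<le> 2 * int k"
proof (induction k)
  case (Suc k)
  then obtain m q :: int where mq: "(T ^^ k) x - x = m - q * eps" "int k \<le> q" "q \<le> 2 * int k"
    by blast
  have step: "(T ^^ Suc k) x - x = m - q * eps + iet_shift eps (code ((T ^^ k) x))"
    using mq(1) by (simp only: funpow_T_Suc)
  show ?case
  proof (cases "code ((T ^^ k) x)")
    case A
    then show ?thesis using mq(2,3) step
      by (intro exI[of _ "m + 1"] exI[of _ "q + 1"]) (simp add: iet_shift_def algebra_simps)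
  next
    case B
    then show ?thesis using mq(2,3) step
      by (intro exI[of _ "m + 1"] exI[of _ "q + 2"]) (simp add: iet_shift_def algebra_simps)
  next
    case C
    then show ?thesis using mq(2,3) step
      by (intro exI[of _ m] exI[of _ "q + 1"]) (simp add: iet_shift_def algebra_simps)
  qed
qed (intro exI[of _ 0]; simp)

lemma funpow_T_rigid:
  assumes a: "0 \<le> a" and b: "b < l"
    and same: "\<forall>k<N. code ((T ^^ k) a) = code ((T ^^ k) b)"
  shows "k \<le> N \<Longrightarrow> a \<le> w \<Longrightarrow> w \<le> b \<Longrightarrow> (T ^^ k) w = w + ((T ^^ k) a - a)"
proof (induction k arbitrary: w)
  case (Suc k)
  define d where "d = (T ^^ k) a - a"
  have w: "(T ^^ k) w = w + d" and b': "(T ^^ k) b = b + d"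
    using Suc.IH[of w] Suc.IH[of b] Suc.prems unfolding d_def by auto
  have "a < l" using Suc.prems b by linarith
  then have "0 \<le> (T ^^ k) a" using funpow_T_maps_to[OF a] by blast
  moreover have "code ((T ^^ k) a) = code ((T ^^ k) b)" using same Suc.prems(1) by simp
  ultimately have "code ((T ^^ k) w) = code ((T ^^ k) a)"
    using code_between[of "(T ^^ k) a" "(T ^^ k) w" "(T ^^ k) b"] w b' d_def Suc.prems by simp
  then show ?case using w by (simp only: funpow_T_Suc) (simp add: d_def)
qed simp

lemma T_step_toward_eps:
  fixes n :: nat
  assumes x: "0 \<le> x" "x < l" and "x \<noteq> eps" and orbit: "frac (x - n * eps) = eps"
  shows "\<exists>n'<n. frac (T x - n' * eps) = eps"
proof -
  have "n \<noteq> 0"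
  proof
    assume "n = 0"
    then have "frac x = eps" using orbit by simp
    then show False using x l_less_one \<open>x \<noteq> eps\<close> by (simp add: frac_eq)
  qed
  have shifted: "frac (x - n * eps + 1) = eps" using orbit by (simp add: frac_1_eq)
  consider (A) "x < l - 1 + eps" | (B) "l - 1 + eps \<le> x" "x < eps" | (C) "eps \<le> x"
    by linarith
  then show ?thesis
  proof cases
    case A
    then have "T x - real (n - 1) * eps = x - n * eps + 1"
      using x \<open>n \<noteq> 0\<close> by (simp add: T3_def of_nat_diff algebra_simps)
    then show ?thesis using shifted \<open>n \<noteq> 0\<close> by (intro exI[of _ "n - 1"]) simp
  next
    case B
    have "n \<noteq> 1"
    proof
      assume "n = 1"
      have "frac (x - eps) = x - eps + 1"
        using B x eps_pos l_less_one by (subst frac_unique_iff) (auto simp: Ints_1)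
      then show False using B orbit \<open>n = 1\<close> eps_less by simp
    qed
    have "T x - real (n - 2) * eps = x - n * eps + 1"
      using B x \<open>n \<noteq> 0\<close> \<open>n \<noteq> 1\<close> by (simp add: T3_def of_nat_diff algebra_simps)
    then show ?thesis using shifted \<open>n \<noteq> 0\<close> by (intro exI[of _ "n - 2"]) simp
  next
    case C
    then have "T x - real (n - 1) * eps = x - n * eps"
      using x \<open>n \<noteq> 0\<close> l_less_one by (simp add: T3_def of_nat_diff algebra_simps)
    then show ?thesis using orbit \<open>n \<noteq> 0\<close> by (intro exI[of _ "n - 1"]) simp
  qed
qed

lemma funpow_T_reaches_eps:
  fixes n :: nat
  shows "0 \<le> x \<Longrightarrow> x < l \<Longrightarrow> frac (x - n * eps) = eps \<Longrightarrow> \<exists>i\<le>n. (T ^^ i) x = eps"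
proof (induction n arbitrary: x rule: less_induct)
  case (less n)
  show ?case
  proof (cases "x = eps")
    case False
    then obtain n' where "n' < n" "frac (T x - n' * eps) = eps"
      using T_step_toward_eps less.prems by blast
    moreover have "0 \<le> T x" "T x < l" using T_maps_to less.prems by auto
    ultimately obtain i where "i \<le> n'" "(T ^^ i) (T x) = eps" using less.IH by blast
    then show ?thesis using \<open>n' < n\<close>
      by (intro exI[of _ "Suc i"]) (simp add: funpow_Suc_right del: funpow.simps)
  qed (intro exI[of _ 0]; simp)
qed

text \<open>Points of the form \<open>j eps mod 1\<close> are the preimages of the discontinuity \<open>eps\<close>;
  the one between \<open>a\<close> and \<open>b\<close> is carried onto \<open>eps\<close> while the interval moves rigidly.\<close>
lemma itinerary_differs_across_orbit_point:
  fixes j :: nat and m :: int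
  assumes a: "0 \<le> a" "a < w" and b: "w < b" "b < l"
    and w: "w = j * eps - m" and "j \<le> M"
  shows "\<exists>k<M. code ((T ^^ k) a) \<noteq> code ((T ^^ k) b)"
proof (rule ccontr)
  assume "\<not> ?thesis"
  then have same: "\<forall>k<M. code ((T ^^ k) a) = code ((T ^^ k) b)" by blast
  have "j \<noteq> 0"
  proof
    assume "j = 0"
    then have "0 < - m" "- m < 1" using w a b l_less_one by simp_all
    then show False by linarith
  qed
  then have "w - real (j - 1) * eps = eps + of_int (- m)"
    using w by (simp add: of_nat_diff algebra_simps)
  then have "frac (w - real (j - 1) * eps) = frac (eps + of_int (- m))" by simp
  also have "\<dots> = eps"
    using eps_pos eps_less l_less_one by (simp only: frac_add_of_int_right) (simp add: frac_eq)
  finally obtain i where "i \<le> j - 1" and hit: "(T ^^ i) w = eps"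
    using funpow_T_reaches_eps[of w] a b by auto
  then have "i < M" using \<open>j \<noteq> 0\<close> \<open>j \<le> M\<close> by linarith
  have rigid: "(T ^^ i) v = v + ((T ^^ i) a - a)" if "a \<le> v" "v \<le> b" for v
    using funpow_T_rigid[OF a(1) b(2) same less_imp_le[OF \<open>i < M\<close>] that] .
  have "a \<le> w" "w \<le> b" "a \<le> b" using a b by simp_all
  then have "(T ^^ i) w - w = (T ^^ i) a - a" "(T ^^ i) b - b = (T ^^ i) a - a"
    using rigid[of w] rigid[of b] by simp_all
  then have "(T ^^ i) a < eps" "eps < (T ^^ i) b"
    using hit a b by linarith+
  moreover have "0 \<le> (T ^^ i) a" "0 \<le> (T ^^ i) b" "(T ^^ i) b < l"
    using funpow_T_maps_to[of a i] funpow_T_maps_to[of b i] a b by auto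
  ultimately have "code ((T ^^ i) a) \<noteq> C" "code ((T ^^ i) b) = C"
    using code_eq_C_iff by auto
  then show False using same \<open>i < M\<close> by auto
qed

end

lemma SUP_of_int_bounded:
  fixes f :: "nat \<Rightarrow> int"
  assumes "(SUP n\<in>S. ereal (of_int (f n))) \<noteq> \<infinity>"
  obtains K :: nat where "\<And>n. n \<in> S \<Longrightarrow> f n \<le> int K"
proof -
  obtain K :: nat where K: "(SUP n\<in>S. ereal (of_int (f n))) < ereal K"
    using assms less_PInf_Ex_of_nat by blast
  have "f n \<le> int K" if "n \<in> S" for n
  proof -
    have "ereal (of_int (f n)) < ereal K"
      using le_less_trans[OF SUP_upper[OF that] K] .
    then show ?thesis by simp
  qed
  then show ?thesis using that by blast
qed

lemma ind_inf_le:
  assumes "\<And>v w r. is_factor u v \<Longrightarrow> is_power v w r \<Longrightarrow> real_of_rat r \<le> c"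
  shows "ind_inf u \<le> ereal c"
  unfolding ind_inf_def ind_word_def
proof (intro Sup_least, clarify)
  fix w
  show "Sup {ereal (real_of_rat r) |r. \<exists>v. is_factor u v \<and> is_power v w r} \<le> ereal c"
    using assms by (intro Sup_least) auto
qed

lemma power_factor_shift:
  assumes "is_factor u v" "is_power v w r"
  obtains i where "\<And>k. k + length w < length v \<Longrightarrow> u (i + k) = u (i + k + length w)"
proof -
  obtain i where v: "v = map u [i..<i + length v]" using assms(1) by (auto simp: is_factor_def)
  have "u (i + k) = u (i + k + length w)" if "k + length w < length v" for k
  proof -
    have "v ! k = v ! (k + length w)"
      using assms(2) that by (auto simp: is_power_def)
    then show ?thesis using that by (subst (asm) (1 2) v) (simp add: add.assoc)
  qed
  then show ?thesis using that by blast
qed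

lemma iet_word_add: "iet_word eps l x0 (i + k) = iet_word eps l ((T3 eps l ^^ i) x0) k"
  by (simp only: iet_word_def add.commute[of i k] funpow_add comp_apply)

locale bounded_three_iet = three_iet eps l + bounded_cf eps K for eps l :: real and K :: nat
begin

lemma funpow_T_displacement_ge:
  assumes "1 \<le> p"
  shows "1 / ((real K + 2) * (2 * real p)) \<le> \<bar>(T ^^ p) y - y\<bar>"
proof -
  obtain m q :: int where mq: "(T ^^ p) y - y = m - q * eps" "int p \<le> q" "q \<le> 2 * int p"
    using funpow_T_displacement by blast
  have "1 \<le> q" using mq(2) assms by linarith
  have "real_of_int q \<le> 2 * real p" using mq(3) by linarith
  then have "(real K + 2) * real_of_int q \<le> (real K + 2) * (2 * real p)"
    by (rule mult_left_mono) simp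
  then have "1 / ((real K + 2) * (2 * real p)) \<le> 1 / ((real K + 2) * real_of_int q)"
    using \<open>1 \<le> q\<close> by (intro frac_le) simp_all
  also have "\<dots> \<le> \<bar>q * eps - m\<bar>" by (rule badly_approximable[OF \<open>1 \<le> q\<close>])
  also have "\<dots> = \<bar>(T ^^ p) y - y\<bar>" using mq(1) by linarith
  finally show ?thesis .
qed

lemma periodic_itinerary_short:
  assumes y: "0 \<le> y" "y < l" and "1 \<le> p"
    and same: "\<forall>k<M. code ((T ^^ k) y) = code ((T ^^ k) ((T ^^ p) y))"
  shows "M < 4 * (K + 2)^2 * p"
proof (rule ccontr)
  assume "\<not> ?thesis"
  then have M: "4 * (K + 2)^2 * p \<le> M" by simp
  define z where "z = (T ^^ p) y"
  have z: "0 \<le> z" "z < l" using funpow_T_maps_to y by (auto simp: z_def)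
  have pos: "0 < 4 * (K + 2)^2 * p" using \<open>1 \<le> p\<close> by simp
  then have "1 \<le> M" using M by linarith
  then obtain j :: nat and m :: int
    where "j < M" and jm: "\<bar>j * eps - m - (y + z) / 2\<bar> < (real K + 2) / M"
    by (rule uniform_inhomogeneous_approx)
  have "(real K + 2) / M \<le> (real K + 2) / (4 * (real K + 2)^2 * p)"
  proof (rule frac_le)
    have "real (4 * (K + 2)^2 * p) \<le> real M" using M by (simp only: of_nat_le_iff)
    then show "4 * (real K + 2)^2 * p \<le> real M" by (simp add: add.commute)
  qed (use pos in simp_all)
  also have "\<dots> = (real K + 2) / ((real K + 2) * (4 * (real K + 2) * p))"
    by (simp add: power2_eq_square algebra_simps)
  also have "\<dots> = 1 / ((real K + 2) * (2 * real p)) / 2"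
    by simp
  also have "\<dots> \<le> \<bar>z - y\<bar> / 2"
    unfolding z_def by (rule divide_right_mono[OF funpow_T_displacement_ge[OF \<open>1 \<le> p\<close>]]) simp
  finally have "min y z < j * eps - m" "j * eps - m < max y z"
    using jm near_midpoint_between by (meson less_le_trans)+
  then obtain k where "k < M" "code ((T ^^ k) (min y z)) \<noteq> code ((T ^^ k) (max y z))"
    using itinerary_differs_across_orbit_point[of "min y z" "j * eps - m" "max y z" j m M]
      y z \<open>j < M\<close> by auto
  then have "code ((T ^^ k) y) \<noteq> code ((T ^^ k) z)" by (cases "y \<le> z") (simp_all add: min_def max_def)
  then show False using same \<open>k < M\<close> by (simp add: z_def)
qed

lemma iet_word_power_exponent_lt:
  assumes x0: "0 \<le> x0" "x0 < l"
    and factor: "is_factor (iet_word eps l x0) v" and power: "is_power v w r"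
  shows "real_of_rat r < 1 + 4 * (real K + 2)^2"
proof -
  define n p where "n = length v" and "p = length w"
  have "1 \<le> p" "p \<le> n" and r: "r = of_nat n / of_nat p"
    using power by (auto simp: is_power_def n_def p_def Suc_le_eq)
  obtain i where shift: "\<And>k. k + p < n \<Longrightarrow> iet_word eps l x0 (i + k) = iet_word eps l x0 (i + k + p)"
    using power_factor_shift[OF factor power] unfolding n_def p_def by blast
  define y where "y = (T ^^ i) x0"
  have y: "0 \<le> y" "y < l" using funpow_T_maps_to x0 by (auto simp: y_def)
  have "\<forall>k < n - p. code ((T ^^ k) y) = code ((T ^^ k) ((T ^^ p) y))"
  proof (intro allI impI)
    fix k assume "k < n - p"
    then have "iet_word eps l y k = iet_word eps l y (k + p)"
      using shift[of k] by (simp add: iet_word_add y_def add.assoc)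
    then show "code ((T ^^ k) y) = code ((T ^^ k) ((T ^^ p) y))"
      by (simp add: iet_word_def funpow_add)
  qed
  then have "n - p < 4 * (K + 2)^2 * p" by (rule periodic_itinerary_short[OF y \<open>1 \<le> p\<close>])
  then have "n < (1 + 4 * (K + 2)^2) * p" using \<open>p \<le> n\<close> by (simp only: distrib_right)
  then have "real n < real ((1 + 4 * (K + 2)^2) * p)"
    by (simp only: of_nat_less_iff)
  then have "real n < (1 + 4 * (real K + 2)^2) * real p"
    by (simp add: add.commute distrib_right)
  moreover have "real_of_rat r = real n / real p" by (simp add: r of_rat_divide)
  ultimately show ?thesis using \<open>1 \<le> p\<close> by (simp add: divide_less_eq)
qed

end

theorem proposition1:
  fixes eps l x0 :: real
  assumes "0 < eps" "eps < 1" "eps \<notin> \<rat>"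
    and "max eps (1 - eps) < l" "l < 1"
    and "0 \<le> x0" "x0 < l"
    and "ind_inf (iet_word eps l x0) = \<infinity>"
  shows "(SUP n\<in>{1..}. ereal (real_of_int (cf_pq eps n))) = \<infinity>"
proof (rule ccontr)
  assume "(SUP n\<in>{1..}. ereal (real_of_int (cf_pq eps n))) \<noteq> \<infinity>"
  then obtain K where "\<And>n. n \<in> {1..} \<Longrightarrow> cf_pq eps n \<le> int K"
    by (rule SUP_of_int_bounded) auto
  then interpret bounded_three_iet eps l K
    using assms(1-5) by unfold_locales auto
  have "ind_inf (iet_word eps l x0) \<le> ereal (1 + 4 * (real K + 2)^2)"
    using iet_word_power_exponent_lt[OF assms(6,7)] by (intro ind_inf_le less_imp_le)
  then show False using assms(8) by simp
qed

end
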